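(* $F:Y\to Y$ is topologically exact: for every nonempty open subset $U\subset Y$ there exists $n\ge0$ such that $F^nU\supset Y$.
   Context: Let $\mathbb{T}=\mathbb{R}/\mathbb{Z}$, $M=[0,1]\times\mathbb{T}$. Fix $\gamma>0$. Let $u:[0,\tfrac34]\times\mathbb{T}\to(0,\infty)$ be $C^2$ with $u(0,\theta)=c_0>0$. Define $f(x,\theta)=(f_1(x,\theta),4\theta\bmod1)$, $f_1(x,\theta)=x(1+x^\gamma u(x,\theta))$ for $0\le x\le\tfrac34$, $f_1=4x-3$ for $\tfrac34<x\le1$. Standing assumptions: $x(1+x^\gamma u)\le1$ on $[0,\tfrac34]\times\mathbb{T}$; $|(Df)_{(x,\theta)}v|\ge|v|$ on $[0,\tfrac34]\times\mathbb{T}$; $f_1(\tfrac34,\theta)>\tfrac{15}{16}$; $\sup|x\,\partial u/\partial x|$, $\sup|\partial u/\partial\theta|$ sufficiently small. Let $X_i=\{(x,\theta):0\le x\le f_1(\tfrac34,\tfrac{i+\theta}{4})\}$, $i=0,\dots,3$, $X=\bigcup_iX_i$, $Y=([\tfrac34,1]\times\mathbb{T})\cap X$, $\varphi$ the first return time of $f$ to $Y$, and $F=f^\varphi:Y\to Y$ the first return map. *)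

theory Defs
  imports "HOL-Analysis.Analysis"
begin

text \<open>The circle T = R/Z is realised as the unit circle in the complex plane,
  via t \<mapsto> cis (2 pi t).  A point (x, theta) of M = [0,1] x T is a pair
  (x, z) :: real \<times> complex with z on the unit circle.  The function u is given
  through its 1-periodic lift u :: real \<times> real \<Rightarrow> real.\<close>

definition circ :: "real \<Rightarrow> complex" where
  "circ t = cis (2 * pi * t)"

definition angle01 :: "complex \<Rightarrow> real" where
  "angle01 z = frac (Arg z / (2 * pi))"

definition Tcirc :: "complex set" where
  "Tcirc = sphere 0 1"

definition Sdom :: "(real \<times> real) set" where
  "Sdom = {0..3/4} \<times> UNIV"

definition f1 :: "real \<Rightarrow> (real \<times> real \<Rightarrow> real) \<Rightarrow> real \<Rightarrow> real \<Rightarrow> real" where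
  "f1 \<gamma> u x t = (if x \<le> 3/4 then x * (1 + x powr \<gamma> * u (x, t)) else 4 * x - 3)"

definition fleft_lift :: "real \<Rightarrow> (real \<times> real \<Rightarrow> real) \<Rightarrow> real \<times> real \<Rightarrow> real \<times> real" where
  "fleft_lift \<gamma> u p = (fst p * (1 + fst p powr \<gamma> * u p), 4 * snd p)"

text \<open>The map f on M; theta \<mapsto> 4 theta mod 1 corresponds to z \<mapsto> z^4.\<close>
definition fmap :: "real \<Rightarrow> (real \<times> real \<Rightarrow> real) \<Rightarrow> real \<times> complex \<Rightarrow> real \<times> complex" where
  "fmap \<gamma> u p = (f1 \<gamma> u (fst p) (angle01 (snd p)), (snd p) ^ 4)"

definition Xi :: "real \<Rightarrow> (real \<times> real \<Rightarrow> real) \<Rightarrow> nat \<Rightarrow> (real \<times> complex) set" where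
  "Xi \<gamma> u i = {(x, z). z \<in> Tcirc \<and> 0 \<le> x \<and> x \<le> f1 \<gamma> u (3/4) ((real i + angle01 z) / 4)}"

definition Xset :: "real \<Rightarrow> (real \<times> real \<Rightarrow> real) \<Rightarrow> (real \<times> complex) set" where
  "Xset \<gamma> u = (\<Union>i\<in>{0..3}. Xi \<gamma> u i)"

definition Yset :: "real \<Rightarrow> (real \<times> real \<Rightarrow> real) \<Rightarrow> (real \<times> complex) set" where
  "Yset \<gamma> u = ({3/4..1} \<times> Tcirc) \<inter> Xset \<gamma> u"

definition return_dom :: "real \<Rightarrow> (real \<times> real \<Rightarrow> real) \<Rightarrow> (real \<times> complex) set" where
  "return_dom \<gamma> u = {p \<in> Yset \<gamma> u. \<exists>n\<ge>1. (fmap \<gamma> u ^^ n) p \<in> Yset \<gamma> u}"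

definition return_time :: "real \<Rightarrow> (real \<times> real \<Rightarrow> real) \<Rightarrow> real \<times> complex \<Rightarrow> nat" where
  "return_time \<gamma> u p = (LEAST n. n \<ge> 1 \<and> (fmap \<gamma> u ^^ n) p \<in> Yset \<gamma> u)"

definition Fret :: "real \<Rightarrow> (real \<times> real \<Rightarrow> real) \<Rightarrow> real \<times> complex \<Rightarrow> real \<times> complex" where
  "Fret \<gamma> u p = (fmap \<gamma> u ^^ return_time \<gamma> u p) p"

primrec Fpow_img :: "real \<Rightarrow> (real \<times> real \<Rightarrow> real) \<Rightarrow> nat \<Rightarrow> (real \<times> complex) set \<Rightarrow> (real \<times> complex) set" where
  "Fpow_img \<gamma> u 0 U = U"
| "Fpow_img \<gamma> u (Suc n) U = Fret \<gamma> u ` (Fpow_img \<gamma> u n U \<inter> return_dom \<gamma> u)"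

definition topologically_exact_F :: "real \<Rightarrow> (real \<times> real \<Rightarrow> real) \<Rightarrow> bool" where
  "topologically_exact_F \<gamma> u \<longleftrightarrow>
     (\<forall>U. openin (top_of_set (Yset \<gamma> u)) U \<and> U \<noteq> {} \<longrightarrow> (\<exists>n. Yset \<gamma> u \<subseteq> Fpow_img \<gamma> u n U))"

definition C2_on :: "(real \<times> real) set \<Rightarrow> (real \<times> real \<Rightarrow> real) \<Rightarrow> bool" where
  "C2_on S g \<longleftrightarrow> (\<exists>(g' :: real \<times> real \<Rightarrow> (real \<times> real) \<Rightarrow>\<^sub>L real)
                      (g'' :: real \<times> real \<Rightarrow> (real \<times> real) \<Rightarrow>\<^sub>L ((real \<times> real) \<Rightarrow>\<^sub>L real)).
      (\<forall>p\<in>S. (g has_derivative blinfun_apply (g' p)) (at p within S)) \<and>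
      (\<forall>p\<in>S. (g' has_derivative blinfun_apply (g'' p)) (at p within S)) \<and>
      continuous_on S g'')"

end

(*
  The x-direction is expanded: the right branch x \<mapsto> 4x - 3 stretches by 4, and the left
  branch, although only weakly expanding, moves every point with x \<ge> c > 0 to the right by
  at least some \<kappa>(c) > 0, so orbits leave [c, 3/4] after boundedly many steps. Take a small
  rectangle in U and follow, over angles close to a fixed one, the x-intervals of its orbit up
  to their returns to Y. A passage through the right branch multiplies the length by 4 and a
  left excursion loses at most a constant factor, so after cutting away the parts lying on the
  wrong side of x = 3/4 or of the upper boundary of Y the length still grows by 7/5 per round.
  As lengths stay below 1, eventually an interval straddles x = 3/4: some F^n U contains all
  points just right of the left edge of Y over an interval of angles. Every interior point of Y
  is reached from there by one right step into (0, 4\<delta>] followed by a long left excursion,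
  and since angles are multiplied by 4 at each step the required angle can be met. Hence
  F^(n+1) U contains the interior of Y, and two more steps add its left and upper edges.
*)

theory Submission
  imports Defs "HOL-Library.Periodic_Fun"
begin

lemma circ_add_int: "circ (s + of_int k) = circ s"
proof -
  have "cis (2 * pi * of_int k) = 1"
    by (rule cis_multiple_2pi) simp
  then show ?thesis
    by (simp add: circ_def distrib_left cis_mult [symmetric])
qed

lemma circ_power: "circ s ^ n = circ (real n * s)"
  unfolding circ_def Complex.DeMoivre by (simp add: algebra_simps)

lemma circ_in_Tcirc [simp]: "circ s \<in> Tcirc"
  by (simp add: circ_def Tcirc_def)

lemma isCont_circ: "isCont circ s"
  using continuous_on_cis[OF continuous_on_mult_left[OF continuous_on_id, of UNIV "2 * pi"]]
  by (simp add: circ_def [abs_def] continuous_on_eq_continuous_at)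

lemma angle01_circ: "angle01 (circ s) = frac s"
proof -
  have "Arg (circ s) / (2 * pi) = s + of_int (- \<lceil>s - 1/2\<rceil>)"
    using Arg_rcis'[of 1 "2 * pi * s"] by (simp add: circ_def rcis_def normalize_angle_def field_simps)
  then show ?thesis
    by (simp only: angle01_def frac_add_of_int_right)
qed

lemma circ_angle01:
  assumes "z \<in> Tcirc" shows "circ (angle01 z) = z"
proof -
  have "norm z = 1" "z \<noteq> 0"
    using assms by (auto simp: Tcirc_def)
  then show ?thesis
    using cis_Arg[of z] circ_add_int[of "Arg z / (2 * pi)" "- \<lfloor>Arg z / (2 * pi)\<rfloor>"]
    by (simp add: circ_def angle01_def frac_def sgn_eq)
qed

lemma periodic_add_of_int:
  fixes g :: "real \<Rightarrow> 'a"
  assumes "\<And>x. g (x + 1) = g x"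
  shows "g (x + of_int k) = g x"
proof -
  interpret periodic_fun_simple' g
    by standard (rule assms)
  show ?thesis
    by (rule plus_of_int)
qed

lemma periodic_frac:
  fixes g :: "real \<Rightarrow> 'a"
  assumes "\<And>x. g (x + 1) = g x"
  shows "g (frac x) = g x"
proof -
  have "g (x + of_int (- \<lfloor>x\<rfloor>)) = g x"
    by (rule periodic_add_of_int) (rule assms)
  then show ?thesis
    by (simp add: frac_def)
qed

lemma isCont_eventually_gt:
  fixes f :: "real \<Rightarrow> real"
  shows "isCont f x \<Longrightarrow> c < f x \<Longrightarrow> \<forall>\<^sub>F y in at x. c < f y"
  unfolding isCont_def by (rule order_tendstoD(1))

lemma isCont_eventually_less:
  fixes f :: "real \<Rightarrow> real"
  shows "isCont f x \<Longrightarrow> f x < c \<Longrightarrow> \<forall>\<^sub>F y in at x. f y < c"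
  unfolding isCont_def by (rule order_tendstoD(2))

lemma isCont_eventually_less_fun:
  fixes f g :: "real \<Rightarrow> real"
  shows "isCont f x \<Longrightarrow> isCont g x \<Longrightarrow> f x < g x \<Longrightarrow> \<forall>\<^sub>F y in at x. f y < g y"
  using isCont_eventually_gt[where f = "\<lambda>y. g y - f y" and c = 0] by (simp add: continuous_diff)

lemma isCont_interval_avoiding:
  fixes a b g :: "real \<Rightarrow> real"
  assumes "isCont a x" "isCont b x" "isCont g x" "a x < b x"
  obtains a' b' where "isCont a' x" "isCont b' x" "\<forall>\<^sub>F y in at x. a y \<le> a' y \<and> b' y \<le> b y"
    "a x \<le> a' x" "b' x \<le> b x" "b' x - a' x = 2/5 * (b x - a x)"
    "(\<forall>\<^sub>F y in at x. b' y < g y) \<or> (\<forall>\<^sub>F y in at x. g y < a' y)"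
proof -
  define l where "l = 2/5 * (b x - a x)"
  have "\<forall>\<^sub>F y in at x. a y < b y - l" "\<forall>\<^sub>F y in at x. a y + l < b y"
    using assms by (auto simp: l_def field_simps intro!: isCont_eventually_less_fun continuous_intros)
  then have incl: "\<forall>\<^sub>F y in at x. a y \<le> b y - l \<and> b y \<le> b y"
    "\<forall>\<^sub>F y in at x. a y \<le> a y \<and> a y + l \<le> b y"
    by (auto elim: eventually_mono)
  have l: "0 \<le> l" "l \<le> b x - a x" "2/5 * (b x - a x) = l"
    using assms(4) by (simp_all add: l_def)
  show ?thesis
  proof (cases "g x < (a x + b x) / 2")
    case True
    then have "g x < b x - l"
      using assms(4) by (simp add: l_def field_simps)
    then have "\<forall>\<^sub>F y in at x. g y < b y - l"
      using assms by (intro isCont_eventually_less_fun continuous_intros)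
    with incl(1) assms l show ?thesis
      by (intro that[of "\<lambda>y. b y - l" b]) (auto intro: continuous_intros)
  next
    case False
    then have "a x + l < g x"
      using assms(4) by (simp add: l_def field_simps)
    then have "\<forall>\<^sub>F y in at x. a y + l < g y"
      using assms by (intro isCont_eventually_less_fun continuous_intros)
    with incl(2) assms l show ?thesis
      by (intro that[of a "\<lambda>y. a y + l"]) (auto intro: continuous_intros)
  qed
qed

lemma exists_scaled_angle:
  fixes c \<eta> \<sigma> \<psi> :: real
  assumes "0 < c" "1 / c \<le> \<eta>"
  obtains s k where "\<sigma> \<le> s" "s \<le> \<sigma> + \<eta>" "c * s = \<psi> + of_int k"
proof
  define k where "k = \<lceil>c * \<sigma> - \<psi>\<rceil>"
  show "c * ((\<psi> + of_int k) / c) = \<psi> + of_int k"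
    using assms by simp
  have "c * \<sigma> - \<psi> \<le> of_int k" "of_int k < c * \<sigma> - \<psi> + 1"
    unfolding k_def by linarith+
  then show "\<sigma> \<le> (\<psi> + of_int k) / c" "(\<psi> + of_int k) / c \<le> \<sigma> + \<eta>"
    using assms by (simp_all add: field_simps)
qed

section \<open>The skew product and its left branch\<close>

lemma Sdom_iff [simp]: "(x, t) \<in> Sdom \<longleftrightarrow> 0 \<le> x \<and> x \<le> 3/4"
  by (simp add: Sdom_def)

locale skew_product =
  fixes \<gamma> :: real and u :: "real \<times> real \<Rightarrow> real" and u' :: "real \<times> real \<Rightarrow> real \<times> real \<Rightarrow> real"
  assumes gamma_pos: "\<gamma> > 0"
    and u_deriv: "p \<in> Sdom \<Longrightarrow> (u has_derivative u' p) (at p within Sdom)"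
    and u_pos: "p \<in> Sdom \<Longrightarrow> u p > 0"
    and u_periodic: "0 \<le> x \<Longrightarrow> x \<le> 3/4 \<Longrightarrow> u (x, t + 1) = u (x, t)"
    and left_branch_le_1: "0 \<le> x \<Longrightarrow> x \<le> 3/4 \<Longrightarrow> x * (1 + x powr \<gamma> * u (x, t)) \<le> 1"
    and left_branch_expanding:
      "p \<in> Sdom \<Longrightarrow> (fleft_lift \<gamma> u has_derivative D) (at p within Sdom) \<Longrightarrow> norm v \<le> norm (D v)"
    and f1_top_gt: "f1 \<gamma> u (3/4) t > 15/16"
begin

definition L :: "real \<Rightarrow> real \<Rightarrow> real" where
  "L x t = x * (1 + x powr \<gamma> * u (x, t))"

definition h :: "real \<Rightarrow> real" where
  "h t = L (3/4) t"

definition G :: "real \<Rightarrow> real" where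
  "G s = max (max (h (s/4)) (h ((1 + s)/4))) (max (h ((2 + s)/4)) (h ((3 + s)/4)))"

abbreviation pt :: "real \<Rightarrow> real \<Rightarrow> real \<times> complex" where
  "pt x s \<equiv> (x, circ s)"

abbreviation fm where "fm \<equiv> fmap \<gamma> u"

abbreviation Y where "Y \<equiv> Yset \<gamma> u"

lemma L_add_of_int: "0 \<le> x \<Longrightarrow> x \<le> 3/4 \<Longrightarrow> L x (t + of_int k) = L x t"
  using periodic_add_of_int[of "\<lambda>t. u (x, t)"] by (simp add: L_def u_periodic)

lemma L_frac: "0 \<le> x \<Longrightarrow> x \<le> 3/4 \<Longrightarrow> L x (frac t) = L x t"
  using periodic_frac[of "\<lambda>t. u (x, t)"] by (simp add: L_def u_periodic)

lemma h_add_of_int: "h (t + of_int k) = h t"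
  by (simp add: h_def L_add_of_int)

lemma G_frac: "G (frac s) = G s"
proof (rule periodic_frac)
  fix s
  have "h ((s + 4)/4) = h (s/4)"
    using h_add_of_int[of "s/4" 1] by (simp add: add_divide_distrib)
  then show "G (s + 1) = G s"
    by (simp add: G_def field_simps max.assoc max.commute max.left_commute)
qed

lemma h_gt: "h t > 15/16"
  using f1_top_gt[of t] by (simp add: f1_def h_def L_def)

lemma L_le_1: "0 \<le> x \<Longrightarrow> x \<le> 3/4 \<Longrightarrow> L x t \<le> 1"
  using left_branch_le_1 by (simp add: L_def)

lemma h_le_G: "h t \<le> G (4 * t)"
  by (simp add: G_def)

lemma G_gt: "G s > 15/16"
  using h_gt[of "s/4"] by (simp add: G_def less_max_iff_disj)

lemma G_le_1: "G s \<le> 1"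
  by (simp add: G_def h_def L_le_1)

lemma G_eq_h: obtains i :: nat where "G s = h ((real i + s)/4)"
proof -
  have "G s = h ((real 0 + s)/4) \<or> G s = h ((real 1 + s)/4) \<or>
        G s = h ((real 2 + s)/4) \<or> G s = h ((real 3 + s)/4)"
    unfolding G_def by (simp add: max_def)
  then show ?thesis
    using that by blast
qed

lemma fm_pt_left: "0 \<le> x \<Longrightarrow> x \<le> 3/4 \<Longrightarrow> fm (pt x s) = pt (L x s) (4 * s)"
  by (simp add: fmap_def f1_def angle01_circ L_frac circ_power flip: L_def)

lemma fm_pt_right: "3/4 < x \<Longrightarrow> fm (pt x s) = pt (4 * x - 3) (4 * s)"
  by (simp add: fmap_def f1_def circ_power)

lemma pt_in_Y_iff: "pt x s \<in> Y \<longleftrightarrow> 3/4 \<le> x \<and> x \<le> G s"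
proof -
  have "{0..3::nat} = {0, 1, 2, 3}"
    by auto
  then have "pt x s \<in> Xset \<gamma> u \<longleftrightarrow> 0 \<le> x \<and> x \<le> G (frac s)"
    by (auto simp: Xset_def Xi_def angle01_circ f1_def G_def le_max_iff_disj simp flip: L_def h_def)
  then show ?thesis
    using G_le_1[of s] by (auto simp: Yset_def G_frac)
qed

lemma Y_eq: "Y = {pt x s | x s. 3/4 \<le> x \<and> x \<le> G s}"
proof (intro equalityI subsetI)
  fix p assume p: "p \<in> Y"
  then have "p = pt (fst p) (angle01 (snd p))"
    by (auto simp: Yset_def circ_angle01)
  with p show "p \<in> {pt x s | x s. 3/4 \<le> x \<and> x \<le> G s}"
    by (metis (mono_tags, lifting) mem_Collect_eq pt_in_Y_iff)
qed (auto simp: pt_in_Y_iff)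

lemma continuous_on_u: "continuous_on Sdom u"
  using u_deriv has_derivative_continuous continuous_on_eq_continuous_within by blast

lemma at_within_Sdom: "0 < x \<Longrightarrow> x < 3/4 \<Longrightarrow> at (x, t) within Sdom = at (x, t)"
  by (rule at_within_interior) (simp add: Sdom_def interior_Times)

lemma continuous_on_L: "continuous_on {0..3/4} (\<lambda>x. L x t)"
proof -
  have "continuous_on {0..3/4} (\<lambda>x. u (x, t))"
    by (rule continuous_on_compose2[OF continuous_on_u]) (auto intro!: continuous_intros)
  then show ?thesis
    unfolding L_def using gamma_pos by (auto intro!: continuous_intros continuous_on_powr')
qed

lemma isCont_h: "isCont h t"
proof -
  have "continuous_on UNIV (\<lambda>t. u (3/4, t))"
    by (rule continuous_on_compose2[OF continuous_on_u]) (auto intro!: continuous_intros)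
  then have "isCont (\<lambda>t. u (3/4, t)) t"
    by (simp add: continuous_on_eq_continuous_at)
  then show ?thesis
    unfolding h_def L_def by (intro continuous_intros)
qed

lemma isCont_G: "isCont G s"
proof -
  have "isCont (\<lambda>s. h ((c + s)/4)) s" for c
    by (rule isCont_o2[OF _ isCont_h]) (auto intro!: continuous_intros)
  from this[of 0] this[of 1] this[of 2] this[of 3] show ?thesis
    unfolding G_def [abs_def] by (intro continuous_max) simp_all
qed

lemma isCont_L_comp:
  assumes "isCont a s0" "0 < a s0" "a s0 < 3/4"
  shows "isCont (\<lambda>s. L (a s) (c * s)) s0"
proof -
  have "isCont u (a s0, c * s0)"
    using continuous_on_u assms(2,3) at_within_Sdom
    by (metis Sdom_iff continuous_on_eq_continuous_within less_eq_real_def)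
  moreover have "isCont (\<lambda>s. (a s, c * s)) s0"
    using assms(1) by (intro continuous_intros)
  ultimately have "isCont (\<lambda>s. u (a s, c * s)) s0"
    by (rule isCont_o2[rotated])
  moreover have "isCont (\<lambda>s. a s powr \<gamma>) s0"
    using assms by (intro continuous_powr continuous_const) auto
  ultimately show ?thesis
    unfolding L_def using assms(1) by (intro continuous_mult continuous_add continuous_const)
qed

lemma fleft_lift_has_derivative:
  assumes "0 < x" "x \<le> 3/4"
  shows "(fleft_lift \<gamma> u has_derivative
      (\<lambda>v. (fst v * (1 + (1 + \<gamma>) * x powr \<gamma> * u (x, t)) + x * x powr \<gamma> * u' (x, t) v, 4 * snd v)))
      (at (x, t) within Sdom)"
  unfolding fleft_lift_def using assms
  by (auto intro!: derivative_eq_intros u_deriv simp: field_simps)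

lemma L_has_expanding_derivative:
  assumes "0 < x" "x < 3/4"
  obtains D where "((\<lambda>y. L y t) has_derivative D) (at x)" "\<And>k. \<bar>k\<bar> \<le> \<bar>D k\<bar>"
proof
  define A where "A = (\<lambda>v. (fst v * (1 + (1 + \<gamma>) * x powr \<gamma> * u (x, t)) + x * x powr \<gamma> * u' (x, t) v, 4 * snd v))"
  have A: "(fleft_lift \<gamma> u has_derivative A) (at (x, t) within Sdom)"
    unfolding A_def using fleft_lift_has_derivative assms by simp
  have "((\<lambda>y. (y, t)) has_derivative (\<lambda>k. (k, 0))) (at x)"
    by (auto intro!: derivative_eq_intros)
  from has_derivative_compose[OF this] A at_within_Sdom[OF assms]
  have "((\<lambda>y. fleft_lift \<gamma> u (y, t)) has_derivative (\<lambda>k. A (k, 0))) (at x)"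
    by simp
  then show "((\<lambda>y. L y t) has_derivative (\<lambda>k. fst (A (k, 0)))) (at x)"
    by (auto dest: has_derivative_fst simp: fleft_lift_def L_def)
  fix k
  have "norm (k, 0::real) \<le> norm (A (k, 0))"
    by (rule left_branch_expanding[OF _ A]) (use assms in simp)
  then show "\<bar>k\<bar> \<le> \<bar>fst (A (k, 0))\<bar>"
    by (simp add: A_def norm_Pair)
qed

lemma L_diff_ge:
  assumes "0 \<le> a" "a < b" "b \<le> 3/4"
  shows "b - a \<le> \<bar>L b t - L a t\<bar>"
proof -
  have "\<forall>\<xi>\<in>{a<..<b}. \<exists>D. ((\<lambda>y. L y t) has_derivative D) (at \<xi>) \<and> (\<forall>k. \<bar>k\<bar> \<le> \<bar>D k\<bar>)"
    using L_has_expanding_derivative assms by (metis greaterThanLessThan_iff le_less_trans less_le_trans)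
  then obtain D where D: "\<And>\<xi>. \<xi> \<in> {a<..<b} \<Longrightarrow>
      ((\<lambda>y. L y t) has_derivative D \<xi>) (at \<xi>) \<and> (\<forall>k. \<bar>k\<bar> \<le> \<bar>D \<xi> k\<bar>)"
    by metis
  have "continuous_on {a..b} (\<lambda>x. L x t)"
    using assms by (intro continuous_on_subset[OF continuous_on_L]) auto
  then obtain \<xi> where \<xi>: "a < \<xi>" "\<xi> < b" "L b t - L a t = D \<xi> (b - a)"
    using mvt[OF assms(2), of "\<lambda>x. L x t" D] D by auto
  then have "\<forall>k. \<bar>k\<bar> \<le> \<bar>D \<xi> k\<bar>"
    using D[of \<xi>] by simp
  then have "\<bar>b - a\<bar> \<le> \<bar>D \<xi> (b - a)\<bar>"
    by blast
  then show ?thesis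
    using \<xi> by simp
qed

lemma L_gt: "0 < x \<Longrightarrow> x \<le> 3/4 \<Longrightarrow> x < L x t"
  using u_pos[of "(x, t)"] by (simp add: L_def)

lemma L_strict_mono:
  assumes "0 \<le> a" "a < b" "b \<le> 3/4"
  shows "L a t < L b t"
proof (rule ccontr)
  assume "\<not> L a t < L b t"
  moreover have "0 < L b t"
    using L_gt[of b t] assms by simp
  moreover have "continuous_on {0..a} (\<lambda>x. L x t)"
    using assms by (intro continuous_on_subset[OF continuous_on_L]) auto
  ultimately obtain c where "0 \<le> c" "c \<le> a" "L c t = L b t"
    using IVT'[of "\<lambda>x. L x t" 0 "L b t" a] assms by (auto simp: L_def)
  then show False
    using L_diff_ge[of c b t] assms by simp
qed

lemma L_expanding:
  assumes "0 \<le> a" "a \<le> b" "b \<le> 3/4"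
  shows "b - a \<le> L b t - L a t"
  using L_diff_ge[of a b t] L_strict_mono[of a b t] assms by (cases "a = b") auto

lemma L_le_h: "0 \<le> x \<Longrightarrow> x \<le> 3/4 \<Longrightarrow> L x t \<le> h t"
  using L_expanding[of x "3/4" t] by (simp add: h_def)

lemma L_preimage:
  assumes "0 < y" "0 \<le> c" "c \<le> 3/4" "y < L c t"
  obtains w where "0 < w" "w < c" "L w t = y"
proof -
  have "continuous_on {0..c} (\<lambda>x. L x t)"
    using assms by (intro continuous_on_subset[OF continuous_on_L]) auto
  then obtain w where w: "0 \<le> w" "w \<le> c" "L w t = y"
    using IVT'[of "\<lambda>x. L x t" 0 y c] assms by (auto simp: L_def)
  moreover have "w \<noteq> 0" "w \<noteq> c"
    using w assms by (auto simp: L_def)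
  ultimately have "0 < w" "w < c"
    by auto
  with w that show ?thesis
    by blast
qed

lemma L_gt_3_4_near_top:
  obtains d where "0 < d" "\<And>y. 3/4 - d \<le> y \<Longrightarrow> y \<le> 3/4 \<Longrightarrow> 3/4 < L y t"
proof -
  have "0 < L (3/4) t - 3/4"
    using h_gt[of t] by (simp add: h_def)
  then obtain d where d: "0 < d"
    "\<And>y. y \<in> {0..3/4} \<Longrightarrow> dist y (3/4) < d \<Longrightarrow> dist (L y t) (L (3/4) t) < L (3/4) t - 3/4"
    using continuous_on_L[of t] unfolding continuous_on_iff by (metis atLeastAtMost_iff order_refl zero_le_divide_iff zero_le_numeral)
  show ?thesis
  proof
    show "0 < min (d/2) (3/4)"
      using d by simp
    fix y assume "3/4 - min (d/2) (3/4) \<le> y" "y \<le> 3/4"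
    then have "dist (L y t) (L (3/4) t) < L (3/4) t - 3/4"
      using d by (intro d(2)) (auto simp: dist_real_def)
    then show "3/4 < L y t"
      by (simp add: dist_real_def)
  qed
qed

lemma u_lower_bound: obtains m where "m > 0" "\<And>x t. 0 \<le> x \<Longrightarrow> x \<le> 3/4 \<Longrightarrow> m \<le> u (x, t)"
proof -
  let ?K = "{0..3/4::real} \<times> {0..1::real}"
  have "continuous_on ?K u"
    by (rule continuous_on_subset[OF continuous_on_u]) (auto simp: Sdom_def)
  then obtain q where q: "q \<in> ?K" "\<And>y. y \<in> ?K \<Longrightarrow> u q \<le> u y"
    using continuous_attains_inf[of ?K u] by (auto simp: compact_Times)
  have "u q \<le> u (x, t)" if "0 \<le> x" "x \<le> 3/4" for x t
    using q(2)[of "(x, frac t)"] periodic_frac[of "\<lambda>t. u (x, t)" t] that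
    by (simp add: frac_lt_1 less_imp_le u_periodic)
  moreover have "u q > 0"
    using q(1) u_pos by (auto simp: Sdom_def)
  ultimately show ?thesis
    using that by blast
qed

lemma L_minus_id_lower_bound:
  assumes "0 < c"
  obtains \<kappa> where "\<kappa> > 0" "\<And>x t. c \<le> x \<Longrightarrow> x \<le> 3/4 \<Longrightarrow> \<kappa> \<le> L x t - x"
proof -
  obtain m where m: "m > 0" "\<And>x t. 0 \<le> x \<Longrightarrow> x \<le> 3/4 \<Longrightarrow> m \<le> u (x, t)"
    using u_lower_bound by blast
  have "c * (c powr \<gamma> * m) \<le> L x t - x" if "c \<le> x" "x \<le> 3/4" for x t
  proof -
    have cm: "c powr \<gamma> * m \<le> x powr \<gamma> * u (x, t)"
      using assms that m gamma_pos by (intro mult_mono powr_mono2) auto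
    then have "c * (c powr \<gamma> * m) \<le> x * (x powr \<gamma> * u (x, t))"
      using assms that m by (intro mult_mono[OF _ cm]) auto
    then show ?thesis
      by (simp add: L_def algebra_simps)
  qed
  moreover have "0 < c * (c powr \<gamma> * m)"
    using assms m by simp
  ultimately show ?thesis
    using that by blast
qed

abbreviation Fimg :: "(real \<times> complex) set \<Rightarrow> (real \<times> complex) set" where
  "Fimg W \<equiv> Fret \<gamma> u ` (W \<inter> return_dom \<gamma> u)"

lemma first_return_in_Fimg:
  assumes "q \<in> W" "q \<in> Y" "1 \<le> r" "(fm ^^ r) q \<in> Y"
    and "\<And>j. 1 \<le> j \<Longrightarrow> j < r \<Longrightarrow> (fm ^^ j) q \<notin> Y"
  shows "(fm ^^ r) q \<in> Fimg W"
proof -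
  have "return_time \<gamma> u q = r"
    unfolding return_time_def using assms(3-5) by (intro Least_equality) (auto simp: not_less [symmetric])
  then have "Fret \<gamma> u q = (fm ^^ r) q"
    by (simp add: Fret_def)
  moreover have "q \<in> return_dom \<gamma> u"
    using assms by (auto simp: return_dom_def)
  ultimately show ?thesis
    using assms(1) by (metis IntI image_eqI)
qed

definition pending :: "(real \<times> complex) set \<Rightarrow> nat \<Rightarrow> real \<times> complex \<Rightarrow> bool" where
  "pending U n w \<longleftrightarrow> (\<exists>y j. y \<in> Fpow_img \<gamma> u n U \<and> y \<in> Y \<and> (fm ^^ j) y = w \<and>
      (\<forall>i. 1 \<le> i \<and> i \<le> j \<longrightarrow> (fm ^^ i) y \<notin> Y))"

lemma pending_init: "y \<in> Fpow_img \<gamma> u n U \<Longrightarrow> y \<in> Y \<Longrightarrow> pending U n y"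
  unfolding pending_def by (rule exI[of _ y], rule exI[of _ 0]) auto

lemma pending_in_Fpow_img: "pending U n w \<Longrightarrow> w \<in> Y \<Longrightarrow> w \<in> Fpow_img \<gamma> u n U"
  unfolding pending_def by (metis funpow_0 le_refl less_one not_less)

lemma pending_step:
  assumes "pending U n w"
  shows "pending U (if fm w \<in> Y then Suc n else n) (fm w)"
proof -
  from assms obtain y j where y: "y \<in> Fpow_img \<gamma> u n U" "y \<in> Y" "(fm ^^ j) y = w"
    "\<And>i. 1 \<le> i \<Longrightarrow> i \<le> j \<Longrightarrow> (fm ^^ i) y \<notin> Y"
    unfolding pending_def by blast
  have orbit: "(fm ^^ Suc j) y = fm w"
    using y(3) by simp
  show ?thesis
  proof (cases "fm w \<in> Y")
    case True
    have "fm w \<in> Fimg (Fpow_img \<gamma> u n U)"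
      using first_return_in_Fimg[OF y(1,2), of "Suc j"] y(4) True orbit by auto
    then show ?thesis
      using True by (simp add: pending_init)
  next
    case False
    then have "\<forall>i. 1 \<le> i \<and> i \<le> Suc j \<longrightarrow> (fm ^^ i) y \<notin> Y"
      using y(4) orbit le_Suc_eq by auto
    then show ?thesis
      unfolding pending_def using False y(1,2) orbit by (simp only: if_False) blast
  qed
qed

end

section \<open>Strips\<close>

locale skew_product_orbit = skew_product +
  fixes U :: "(real \<times> complex) set" and s0 :: real
begin

text \<open>A strip consists of the x-intervals [a s, b s] at the angles 4^m s, for all s in a punctured
  neighbourhood of s0, of points that are pending at level n. The endpoints vary with s since
  the left branch depends on the angle; only their values at s0 are compared.\<close>

definition strip :: "nat \<Rightarrow> nat \<Rightarrow> (real \<Rightarrow> real) \<Rightarrow> (real \<Rightarrow> real) \<Rightarrow> bool" where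
  "strip n m a b \<longleftrightarrow> isCont a s0 \<and> isCont b s0 \<and> 0 < a s0 \<and> a s0 < b s0 \<and> b s0 \<le> 1 \<and>
     (\<forall>\<^sub>F s in at s0. \<forall>x. a s \<le> x \<and> x \<le> b s \<longrightarrow> pending U n (pt x (4 ^ m * s)))"

definition edge_box :: "nat \<Rightarrow> nat \<Rightarrow> real \<Rightarrow> bool" where
  "edge_box n m \<delta> \<longleftrightarrow> 0 < \<delta> \<and>
     (\<forall>\<^sub>F s in at s0. \<forall>x. 3/4 < x \<and> x \<le> 3/4 + \<delta> \<longrightarrow> pt x (4 ^ m * s) \<in> Fpow_img \<gamma> u n U)"

definition box_or_right_strip :: "real \<Rightarrow> bool" where
  "box_or_right_strip l \<longleftrightarrow> (\<exists>n m \<delta>. edge_box n m \<delta>) \<or>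
     (\<exists>n m a b. strip n m a b \<and> 3/4 < a s0 \<and> l \<le> b s0 - a s0)"

lemma box_or_right_strip_mono: "box_or_right_strip l \<Longrightarrow> l' \<le> l \<Longrightarrow> box_or_right_strip l'"
  unfolding box_or_right_strip_def by force

lemma box_or_right_strip_of_strip:
  "strip n m a b \<Longrightarrow> 3/4 < a s0 \<Longrightarrow> l \<le> b s0 - a s0 \<Longrightarrow> box_or_right_strip l"
  unfolding box_or_right_strip_def by blast

lemma box_or_right_strip_of_edge_box: "\<exists>n m \<delta>. edge_box n m \<delta> \<Longrightarrow> box_or_right_strip l"
  unfolding box_or_right_strip_def by blast

lemma strip_of_image:
  assumes "\<forall>\<^sub>F s in at s0. \<forall>x. a s \<le> x \<and> x \<le> b s \<longrightarrow> pending U (k s x) (pt x (4 ^ m * s))"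
    and "\<forall>\<^sub>F s in at s0. a s \<le> a' s \<and> b' s \<le> b s \<and> (\<forall>x. a' s \<le> x \<and> x \<le> b' s \<longrightarrow> k s x = n)"
    and "isCont a' s0" "isCont b' s0" "0 < a' s0" "a' s0 < b' s0" "b' s0 \<le> 1"
  shows "strip n m a' b'"
proof -
  from assms(1,2) have "\<forall>\<^sub>F s in at s0. \<forall>x. a' s \<le> x \<and> x \<le> b' s \<longrightarrow> pending U n (pt x (4 ^ m * s))"
    by eventually_elim (metis order_trans)
  with assms(3-) show ?thesis
    by (simp add: strip_def)
qed

lemma edge_box_of_image:
  assumes "\<forall>\<^sub>F s in at s0. \<forall>x. a s \<le> x \<and> x \<le> b s \<longrightarrow> pending U (k s x) (pt x (4 ^ m * s))"
    and "\<forall>\<^sub>F s in at s0. \<forall>x. 3/4 < x \<and> x \<le> 15/16 \<longrightarrow> k s x = n"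
    and "isCont a s0" "isCont b s0" "a s0 < 3/4" "3/4 < b s0"
  shows "\<exists>\<delta>. edge_box n m \<delta>"
proof -
  define \<delta> where "\<delta> = min (3/16) ((b s0 - 3/4) / 2)"
  have "\<delta> \<le> (b s0 - 3/4) / 2"
    unfolding \<delta>_def by (rule min.cobounded2)
  then have \<delta>: "0 < \<delta>" "\<delta> \<le> 3/16" "3/4 + \<delta> < b s0"
    using assms(6) by (auto simp: \<delta>_def)
  have "\<forall>\<^sub>F s in at s0. a s < 3/4" "\<forall>\<^sub>F s in at s0. 3/4 + \<delta> < b s"
    using assms(3-6) \<delta>(3) by (auto intro: isCont_eventually_less isCont_eventually_gt)
  with assms(1,2) have "\<forall>\<^sub>F s in at s0. \<forall>x. 3/4 < x \<and> x \<le> 3/4 + \<delta> \<longrightarrow> pt x (4 ^ m * s) \<in> Fpow_img \<gamma> u n U"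
  proof eventually_elim
    case (elim s)
    show ?case
    proof (intro allI impI)
      fix x assume x: "3/4 < x \<and> x \<le> 3/4 + \<delta>"
      then have "pending U n (pt x (4 ^ m * s))"
        using elim \<delta> by force
      moreover have "pt x (4 ^ m * s) \<in> Y"
        using x \<delta> G_gt[of "4 ^ m * s"] by (simp add: pt_in_Y_iff)
      ultimately show "pt x (4 ^ m * s) \<in> Fpow_img \<gamma> u n U"
        by (rule pending_in_Fpow_img)
    qed
  qed
  with \<delta> show ?thesis
    unfolding edge_box_def by blast
qed

lemma strip_image_right:
  assumes "strip n m a b" "3/4 < a s0"
  shows "\<forall>\<^sub>F s in at s0. \<forall>x. 4 * a s - 3 \<le> x \<and> x \<le> 4 * b s - 3 \<longrightarrow>
    pending U (if pt x (4 ^ Suc m * s) \<in> Y then Suc n else n) (pt x (4 ^ Suc m * s))"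
proof -
  have "\<forall>\<^sub>F s in at s0. 3/4 < a s"
    using assms by (auto simp: strip_def intro: isCont_eventually_gt)
  moreover have "\<forall>\<^sub>F s in at s0. \<forall>x. a s \<le> x \<and> x \<le> b s \<longrightarrow> pending U n (pt x (4 ^ m * s))"
    using assms by (simp add: strip_def)
  ultimately show ?thesis
  proof eventually_elim
    case (elim s)
    show ?case
    proof (intro allI impI)
      fix x assume x: "4 * a s - 3 \<le> x \<and> x \<le> 4 * b s - 3"
      define y where "y = (x + 3) / 4"
      have "3/4 < y" "4 * y - 3 = x"
        using x elim by (simp_all add: y_def field_simps)
      then have "fm (pt y (4 ^ m * s)) = pt x (4 ^ Suc m * s)"
        by (simp add: fm_pt_right mult.assoc)
      moreover have "pending U n (pt y (4 ^ m * s))"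
        using elim x by (simp add: y_def)
      ultimately show "pending U (if pt x (4 ^ Suc m * s) \<in> Y then Suc n else n) (pt x (4 ^ Suc m * s))"
        using pending_step by metis
    qed
  qed
qed

lemma strip_image_left:
  assumes "strip n m a b" "b s0 < 3/4"
  shows "\<forall>\<^sub>F s in at s0. \<forall>x. L (a s) (4 ^ m * s) \<le> x \<and> x \<le> L (b s) (4 ^ m * s) \<longrightarrow>
    pending U (if 3/4 \<le> x then Suc n else n) (pt x (4 ^ Suc m * s))"
proof -
  have "\<forall>\<^sub>F s in at s0. 0 < a s" "\<forall>\<^sub>F s in at s0. a s < b s" "\<forall>\<^sub>F s in at s0. b s < 3/4"
    using assms
    by (auto simp: strip_def intro: isCont_eventually_gt isCont_eventually_less isCont_eventually_less_fun)
  moreover have "\<forall>\<^sub>F s in at s0. \<forall>x. a s \<le> x \<and> x \<le> b s \<longrightarrow> pending U n (pt x (4 ^ m * s))"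
    using assms by (simp add: strip_def)
  ultimately show ?thesis
  proof eventually_elim
    case (elim s)
    let ?t = "4 ^ m * s"
    show ?case
    proof (intro allI impI)
      fix x assume x: "L (a s) ?t \<le> x \<and> x \<le> L (b s) ?t"
      have "continuous_on {a s..b s} (\<lambda>y. L y ?t)"
        using elim by (intro continuous_on_subset[OF continuous_on_L]) auto
      then obtain y where y: "a s \<le> y" "y \<le> b s" "L y ?t = x"
        using IVT'[of "\<lambda>y. L y ?t" "a s" x "b s"] x elim by force
      have y_le: "0 \<le> y" "y \<le> 3/4"
        using y elim by auto
      have fm: "fm (pt y ?t) = pt x (4 ^ Suc m * s)"
        using y y_le by (simp add: fm_pt_left mult.assoc)
      have "x \<le> G (4 ^ Suc m * s)"
        using L_le_h[OF y_le, of ?t] h_le_G[of ?t] y(3) by (simp add: mult.assoc)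
      then have "fm (pt y ?t) \<in> Y \<longleftrightarrow> 3/4 \<le> x"
        by (simp only: fm pt_in_Y_iff) simp
      moreover have "pending U (if fm (pt y ?t) \<in> Y then Suc n else n) (fm (pt y ?t))"
        using elim y by (intro pending_step) blast
      ultimately show "pending U (if 3/4 \<le> x then Suc n else n) (pt x (4 ^ Suc m * s))"
        by (simp only: fm)
    qed
  qed
qed

lemma strip_left_image_bounds:
  assumes "strip n m a b" "b s0 < 3/4"
  shows "isCont (\<lambda>s. L (a s) (4 ^ m * s)) s0" "isCont (\<lambda>s. L (b s) (4 ^ m * s)) s0"
    "a s0 < L (a s0) (4 ^ m * s0)" "L (b s0) (4 ^ m * s0) \<le> 1"
    "b s0 - a s0 \<le> L (b s0) (4 ^ m * s0) - L (a s0) (4 ^ m * s0)"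
  using assms by (auto simp: strip_def intro!: isCont_L_comp L_gt L_le_1 L_expanding)

lemma left_strip_exit:
  assumes S: "strip n m a b" and b: "b s0 < 3/4" and exit: "3/4 < L (b s0) (4 ^ m * s0)"
  shows "box_or_right_strip (9/10 * (b s0 - a s0))"
proof -
  define a' where "a' = (\<lambda>s. L (a s) (4 ^ m * s))"
  define b' where "b' = (\<lambda>s. L (b s) (4 ^ m * s))"
  define l where "l = b s0 - a s0"
  have bounds: "isCont a' s0" "isCont b' s0" "a s0 < a' s0" "b' s0 \<le> 1" "l \<le> b' s0 - a' s0"
    using strip_left_image_bounds[OF S b] by (simp_all add: a'_def b'_def l_def)
  have img: "\<forall>\<^sub>F s in at s0. \<forall>x. a' s \<le> x \<and> x \<le> b' s \<longrightarrow>
      pending U (if 3/4 \<le> x then Suc n else n) (pt x (4 ^ Suc m * s))"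
    using strip_image_left[OF S b] by (simp add: a'_def b'_def)
  have l: "0 < l"
    using S by (simp add: strip_def l_def)
  show ?thesis
  proof (cases "a' s0 < 3/4")
    case True
    then have "\<exists>\<delta>. edge_box (Suc n) (Suc m) \<delta>"
      using exit bounds by (intro edge_box_of_image[OF img]) (auto simp: b'_def)
    then show ?thesis
      by (blast intro: box_or_right_strip_of_edge_box)
  next
    case False
    define a'' where "a'' = (\<lambda>s. a' s + l/10)"
    have "isCont a'' s0"
      unfolding a''_def using bounds by (intro continuous_intros)
    moreover have "3/4 < a'' s0"
      using False l by (simp add: a''_def)
    ultimately have "\<forall>\<^sub>F s in at s0. 3/4 < a'' s"
      by (rule isCont_eventually_gt)
    then have "\<forall>\<^sub>F s in at s0. a' s \<le> a'' s \<and> b' s \<le> b' s \<and>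
        (\<forall>x. a'' s \<le> x \<and> x \<le> b' s \<longrightarrow> (if 3/4 \<le> x then Suc n else n) = Suc n)"
      by (rule eventually_mono) (use l in \<open>auto simp: a''_def\<close>)
    then have "strip (Suc n) (Suc m) a'' b'"
      using \<open>isCont a'' s0\<close> \<open>3/4 < a'' s0\<close> bounds l
      by (intro strip_of_image[OF img]) (auto simp: a''_def)
    moreover have "9/10 * l \<le> b' s0 - a'' s0"
      unfolding a''_def using bounds(5) by linarith
    ultimately show ?thesis
      using \<open>3/4 < a'' s0\<close> by (simp add: box_or_right_strip_of_strip l_def)
  qed
qed

lemma strip_left_image_below:
  assumes S: "strip n m a b" and b: "b s0 < 3/4"
    and b': "isCont b' s0" "L (a s0) (4 ^ m * s0) < b' s0" "b' s0 < 3/4"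
    "\<forall>\<^sub>F s in at s0. b' s \<le> L (b s) (4 ^ m * s)"
  shows "strip n (Suc m) (\<lambda>s. L (a s) (4 ^ m * s)) b'"
proof (rule strip_of_image[OF strip_image_left[OF S b]])
  have "\<forall>\<^sub>F s in at s0. b' s < 3/4"
    using b' by (intro isCont_eventually_less)
  with b'(4) show "\<forall>\<^sub>F s in at s0. L (a s) (4 ^ m * s) \<le> L (a s) (4 ^ m * s) \<and> b' s \<le> L (b s) (4 ^ m * s) \<and>
      (\<forall>x. L (a s) (4 ^ m * s) \<le> x \<and> x \<le> b' s \<longrightarrow> (if 3/4 \<le> x then Suc n else n) = n)"
    by eventually_elim auto
qed (use strip_left_image_bounds[OF S b] S b' in \<open>auto simp: strip_def\<close>)

text \<open>If the top of the image lands exactly on the threshold, a little is cut off so that the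
  next image crosses it strictly.\<close>

lemma left_strip_touch:
  assumes S: "strip n m a b" and b: "b s0 < 3/4" and touch: "L (b s0) (4 ^ m * s0) = 3/4"
  shows "box_or_right_strip (81/100 * (b s0 - a s0))"
proof -
  define l where "l = b s0 - a s0"
  define a' where "a' = (\<lambda>s. L (a s) (4 ^ m * s))"
  have bounds: "isCont (\<lambda>s. L (b s) (4 ^ m * s)) s0" "l \<le> 3/4 - a' s0"
    using strip_left_image_bounds[OF S b] touch by (simp_all add: a'_def l_def)
  have l: "0 < l"
    using S by (simp add: strip_def l_def)
  obtain d where d: "0 < d" "\<And>y. 3/4 - d \<le> y \<Longrightarrow> y \<le> 3/4 \<Longrightarrow> 3/4 < L y (4 ^ Suc m * s0)"
    using L_gt_3_4_near_top by blast
  define \<epsilon> where "\<epsilon> = min (l/10) d"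
  have \<epsilon>: "0 < \<epsilon>" "\<epsilon> \<le> l/10" "\<epsilon> \<le> d"
    using d l by (auto simp: \<epsilon>_def)
  define b' where "b' = (\<lambda>s. L (b s) (4 ^ m * s) - \<epsilon>)"
  have "strip n (Suc m) a' b'"
    using touch bounds \<epsilon> l unfolding a'_def b'_def
    by (intro strip_left_image_below[OF S b] continuous_intros) auto
  moreover have "b' s0 = 3/4 - \<epsilon>"
    using touch by (simp add: b'_def)
  moreover have "3/4 < L (3/4 - \<epsilon>) (4 ^ Suc m * s0)"
    using \<epsilon> by (intro d(2)) auto
  ultimately have "box_or_right_strip (9/10 * (b' s0 - a' s0))"
    using \<epsilon> by (intro left_strip_exit) auto
  then show ?thesis
    by (rule box_or_right_strip_mono) (use \<open>b' s0 = 3/4 - \<epsilon>\<close> bounds \<epsilon> in \<open>simp add: l_def\<close>)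
qed

lemma left_strip_run:
  assumes "0 < c" "0 < \<kappa>" and \<kappa>: "\<And>x t. c \<le> x \<Longrightarrow> x \<le> 3/4 \<Longrightarrow> \<kappa> \<le> L x t - x"
  shows "strip n m a b \<Longrightarrow> b s0 < 3/4 \<Longrightarrow> c \<le> a s0 \<Longrightarrow> 3/4 < a s0 + real k * \<kappa> \<Longrightarrow>
    box_or_right_strip (81/100 * (b s0 - a s0))"
proof (induction k arbitrary: n m a b)
  case 0
  then show ?case
    by (simp add: strip_def)
next
  case (Suc k)
  note S = Suc.prems(1) and b = Suc.prems(2)
  define a' where "a' = (\<lambda>s. L (a s) (4 ^ m * s))"
  define b' where "b' = (\<lambda>s. L (b s) (4 ^ m * s))"
  have bounds: "isCont b' s0" "b s0 - a s0 \<le> b' s0 - a' s0"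
    using strip_left_image_bounds[OF S b] by (simp_all add: a'_def b'_def)
  have "a s0 \<le> 3/4"
    using S b by (simp add: strip_def)
  then have a': "a s0 + \<kappa> \<le> a' s0"
    using \<kappa>[of "a s0" "4 ^ m * s0"] Suc.prems(3) by (simp add: a'_def)
  consider (below) "b' s0 < 3/4" | (exit) "3/4 < b' s0" | (touch) "b' s0 = 3/4"
    by linarith
  then show ?case
  proof cases
    case below
    have "strip n (Suc m) a' b'"
      unfolding a'_def using S b below bounds by (intro strip_left_image_below) (auto simp: strip_def a'_def b'_def)
    then have "box_or_right_strip (81/100 * (b' s0 - a' s0))"
      using Suc.IH below Suc.prems(3,4) a' \<open>0 < \<kappa>\<close> by (simp add: algebra_simps)
    then show ?thesis
      by (rule box_or_right_strip_mono) (use bounds in simp)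
  next
    case exit
    then have "box_or_right_strip (9/10 * (b s0 - a s0))"
      by (intro left_strip_exit[OF S b]) (simp add: b'_def)
    then show ?thesis
      by (rule box_or_right_strip_mono) (use S in \<open>simp add: strip_def\<close>)
  next
    case touch
    then show ?thesis
      using left_strip_touch[OF S b] by (simp add: b'_def)
  qed
qed

lemma left_strip_grows:
  assumes S: "strip n m a b" and b: "b s0 < 3/4"
  shows "box_or_right_strip (81/100 * (b s0 - a s0))"
proof -
  have a: "0 < a s0"
    using S by (simp add: strip_def)
  obtain \<kappa> where \<kappa>: "0 < \<kappa>" "\<And>x t. a s0 \<le> x \<Longrightarrow> x \<le> 3/4 \<Longrightarrow> \<kappa> \<le> L x t - x"
    using L_minus_id_lower_bound[OF a] by blast
  obtain k :: nat where "3/4 / \<kappa> < k"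
    using reals_Archimedean2 by blast
  then have "3/4 < a s0 + real k * \<kappa>"
    using \<kappa>(1) a by (simp add: field_simps)
  then show ?thesis
    using left_strip_run[OF a \<kappa>] S b by blast
qed

lemma right_image_split_at_boundary:
  assumes S: "strip n m a b" and a: "3/4 < a s0"
    and a': "isCont a' s0" "3/4 < a' s0" "a' s0 < 4 * b s0 - 3" "\<forall>\<^sub>F s in at s0. 4 * a s - 3 \<le> a' s"
  shows "box_or_right_strip (2/5 * (4 * b s0 - 3 - a' s0))"
proof -
  define b1 where "b1 = (\<lambda>s. 4 * b s - 3)"
  define k where "k = (\<lambda>s x. if pt x (4 ^ Suc m * s) \<in> Y then Suc n else n)"
  have img: "\<forall>\<^sub>F s in at s0. \<forall>x. a' s \<le> x \<and> x \<le> b1 s \<longrightarrow> pending U (k s x) (pt x (4 ^ Suc m * s))"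
    using strip_image_right[OF S a] a'(4) unfolding b1_def k_def by eventually_elim auto
  have S': "isCont b1 s0" "b1 s0 \<le> 1"
    using S by (auto simp: strip_def b1_def intro!: continuous_intros)
  have "isCont (\<lambda>s. G (4 ^ Suc m * s)) s0"
    by (rule isCont_o2[OF _ isCont_G]) (intro continuous_intros)
  then obtain a'' b'' where piece: "isCont a'' s0" "isCont b'' s0"
      "\<forall>\<^sub>F s in at s0. a' s \<le> a'' s \<and> b'' s \<le> b1 s" "a' s0 \<le> a'' s0" "b'' s0 \<le> b1 s0"
      "b'' s0 - a'' s0 = 2/5 * (b1 s0 - a' s0)"
    and side: "(\<forall>\<^sub>F s in at s0. b'' s < G (4 ^ Suc m * s)) \<or> (\<forall>\<^sub>F s in at s0. G (4 ^ Suc m * s) < a'' s)"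
    using isCont_interval_avoiding[OF a'(1) S'(1)] a'(3) by (auto simp: b1_def)
  have a'_gt: "\<forall>\<^sub>F s in at s0. 3/4 < a' s"
    using a' by (intro isCont_eventually_gt)
  have "\<exists>n'. \<forall>\<^sub>F s in at s0. a' s \<le> a'' s \<and> b'' s \<le> b1 s \<and>
      (\<forall>x. a'' s \<le> x \<and> x \<le> b'' s \<longrightarrow> k s x = n')"
    using side
  proof
    assume "\<forall>\<^sub>F s in at s0. b'' s < G (4 ^ Suc m * s)"
    with a'_gt piece(3) show ?thesis
      by (intro exI[of _ "Suc n"], eventually_elim) (auto simp: k_def pt_in_Y_iff)
  next
    assume "\<forall>\<^sub>F s in at s0. G (4 ^ Suc m * s) < a'' s"
    with piece(3) show ?thesis
      by (intro exI[of _ n], eventually_elim) (auto simp: k_def pt_in_Y_iff)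
  qed
  then obtain n' where "strip n' (Suc m) a'' b''"
    using strip_of_image[OF img] piece a'(2,3) S' by (fastforce simp: b1_def)
  moreover have "3/4 < a'' s0"
    using a'(2) piece(4) by linarith
  ultimately show ?thesis
    using piece(6) by (intro box_or_right_strip_of_strip) (auto simp: b1_def)
qed

text \<open>The right branch stretches by 4; afterwards at worst a factor 81/100 is lost in a left run,
  or 2/5 when cutting at the upper boundary of Y, after discarding the first eighth.\<close>

lemma right_strip_grows:
  assumes S: "strip n m a b" and a: "3/4 < a s0"
  shows "box_or_right_strip (7/5 * (b s0 - a s0))"
proof -
  define l where "l = b s0 - a s0"
  define a1 where "a1 = (\<lambda>s. 4 * a s - 3)"
  define b1 where "b1 = (\<lambda>s. 4 * b s - 3)"
  have img: "\<forall>\<^sub>F s in at s0. \<forall>x. a1 s \<le> x \<and> x \<le> b1 s \<longrightarrow>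
      pending U (if pt x (4 ^ Suc m * s) \<in> Y then Suc n else n) (pt x (4 ^ Suc m * s))"
    using strip_image_right[OF S a] by (simp add: a1_def b1_def)
  have cont: "isCont a1 s0" "isCont b1 s0" and l: "0 < l"
    using S by (auto simp: strip_def a1_def b1_def l_def intro!: continuous_intros)
  consider (straddle) "a1 s0 < 3/4" "3/4 < b1 s0" | (below) "b1 s0 \<le> 3/4" | (above) "3/4 \<le> a1 s0"
    by linarith
  then show ?thesis
  proof cases
    case straddle
    have "\<forall>x. 3/4 < x \<and> x \<le> 15/16 \<longrightarrow> pt x (4 ^ Suc m * s) \<in> Y" for s
      using G_gt[of "4 ^ Suc m * s"] by (auto simp: pt_in_Y_iff)
    then have "\<exists>\<delta>. edge_box (Suc n) (Suc m) \<delta>"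
      using straddle cont by (intro edge_box_of_image[OF img]) auto
    then show ?thesis
      by (blast intro: box_or_right_strip_of_edge_box)
  next
    case below
    define b2 where "b2 = (\<lambda>s. b1 s - l/2)"
    have "\<forall>\<^sub>F s in at s0. b2 s < 3/4"
      using below l cont by (intro isCont_eventually_less) (auto simp: b2_def intro!: continuous_intros)
    then have "\<forall>\<^sub>F s in at s0. a1 s \<le> a1 s \<and> b2 s \<le> b1 s \<and>
        (\<forall>x. a1 s \<le> x \<and> x \<le> b2 s \<longrightarrow> (if pt x (4 ^ Suc m * s) \<in> Y then Suc n else n) = n)"
      by (rule eventually_mono) (use l in \<open>auto simp: b2_def pt_in_Y_iff\<close>)
    moreover have wl: "b2 s0 - a1 s0 = 7/2 * l" "0 < a1 s0" "b1 s0 \<le> 1"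
      using a S by (simp_all add: a1_def b1_def b2_def l_def strip_def field_simps)
    ultimately have "strip n (Suc m) a1 b2"
      using cont l below by (intro strip_of_image[OF img]) (auto simp: b2_def intro!: continuous_intros)
    then have "box_or_right_strip (81/100 * (b2 s0 - a1 s0))"
      using below l by (intro left_strip_grows) (auto simp: b2_def)
    then show ?thesis
      by (rule box_or_right_strip_mono) (use wl l in \<open>simp flip: l_def\<close>)
  next
    case above
    have "box_or_right_strip (2/5 * (4 * b s0 - 3 - (a1 s0 + l/2)))"
      using above l S by (intro right_image_split_at_boundary[OF S a])
        (auto simp: a1_def b1_def l_def strip_def field_simps intro!: continuous_intros)
    then show ?thesis
      by (rule box_or_right_strip_mono) (simp add: a1_def l_def field_simps)
  qed
qed

lemma right_strip_edge_box:
  assumes "strip n m a b" "3/4 < a s0"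
  shows "\<exists>n m \<delta>. edge_box n m \<delta>"
proof -
  have "\<And>n m a b. strip n m a b \<Longrightarrow> 3/4 < a s0 \<Longrightarrow> 1 < (b s0 - a s0) * (7/5) ^ N \<Longrightarrow>
      \<exists>n m \<delta>. edge_box n m \<delta>" for N
  proof (induction N)
    case 0
    then show ?case
      by (simp add: strip_def)
  next
    case (Suc N n m a b)
    from right_strip_grows[OF Suc.prems(1,2)] show ?case
      unfolding box_or_right_strip_def
    proof (elim disjE exE conjE)
      fix n' m' a' b' assume S': "strip n' m' a' b'" "3/4 < a' s0" "7/5 * (b s0 - a s0) \<le> b' s0 - a' s0"
      have "1 < (7/5 * (b s0 - a s0)) * (7/5) ^ N"
        using Suc.prems(3) by (simp only: power_Suc mult_ac)
      also have "\<dots> \<le> (b' s0 - a' s0) * (7/5) ^ N"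
        using S'(3) by (rule mult_right_mono) simp
      finally show ?thesis
        using Suc.IH[OF S'(1,2)] by blast
    qed blast
  qed
  moreover obtain N where "1 / (b s0 - a s0) < (7/5 :: real) ^ N"
    using real_arch_pow[of "7/5"] by auto
  then have "1 < (b s0 - a s0) * (7/5) ^ N"
    using assms(1) by (simp add: strip_def field_simps)
  ultimately show ?thesis
    using assms by blast
qed

lemma initial_strip:
  assumes "openin (top_of_set Y) U" "pt x0 s0 \<in> U"
  obtains a b where "strip 0 0 a b" "3/4 < a s0"
proof -
  obtain r where r: "0 < r" "ball (pt x0 s0) r \<inter> Y \<subseteq> U"
    using assms unfolding openin_contains_ball by blast
  have "pt x0 s0 \<in> Y"
    using assms openin_imp_subset by blast
  then have x0: "3/4 \<le> x0" "x0 \<le> G s0"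
    by (simp_all add: pt_in_Y_iff)
  define lo where "lo = max (3/4) (x0 - r/2)"
  define hi where "hi = min (G s0) (x0 + r/2)"
  define a where "a = lo + (hi - lo) / 3"
  define b where "b = lo + 2 * (hi - lo) / 3"
  have "lo < hi" "3/4 \<le> lo" "x0 - r/2 \<le> lo" "hi \<le> G s0" "hi \<le> x0 + r/2"
    using x0 r G_gt[of s0] by (simp_all add: lo_def hi_def)
  then have ab: "3/4 < a" "a < b" "b < G s0" "x0 - r/2 < a" "b < x0 + r/2"
    by (auto simp: a_def b_def field_simps)
  have "\<forall>\<^sub>F s in at s0. b < G s"
    using ab by (intro isCont_eventually_gt isCont_G)
  moreover have "\<forall>\<^sub>F s in at s0. dist (circ s) (circ s0) < r/2"
    using r(1) by (intro isCont_eventually_less continuous_intros isCont_circ) simp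
  ultimately have "\<forall>\<^sub>F s in at s0. \<forall>x. a \<le> x \<and> x \<le> b \<longrightarrow> pending U 0 (pt x (4 ^ 0 * s))"
  proof eventually_elim
    case (elim s)
    show ?case
    proof (intro allI impI)
      fix x assume x: "a \<le> x \<and> x \<le> b"
      have "dist (pt x s) (pt x0 s0) \<le> dist x x0 + dist (circ s) (circ s0)"
        using norm_Pair_le[of "x - x0" "circ s - circ s0"] by (simp add: dist_norm)
      also have "\<dots> < r"
        using x ab elim by (auto simp: dist_real_def split: abs_split)
      finally have "pt x s \<in> U"
        using r(2) x ab elim by (auto simp: pt_in_Y_iff dist_commute)
      moreover have "pt x s \<in> Y"
        using x ab elim by (simp add: pt_in_Y_iff)
      ultimately show "pending U 0 (pt x (4 ^ 0 * s))"
        by (simp add: pending_init)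
    qed
  qed
  then have "strip 0 0 (\<lambda>_. a) (\<lambda>_. b)"
    using ab G_le_1[of s0] by (simp add: strip_def)
  then show ?thesis
    using ab that by blast
qed

lemma edge_box_angle_interval:
  assumes "edge_box n m \<delta>"
  obtains \<sigma> \<eta> where "0 < \<eta>"
    "\<And>s x. \<sigma> \<le> s \<Longrightarrow> s \<le> \<sigma> + \<eta> \<Longrightarrow> 3/4 < x \<Longrightarrow> x \<le> 3/4 + \<delta> \<Longrightarrow> pt x s \<in> Fpow_img \<gamma> u n U"
proof -
  from assms obtain r where r: "0 < r"
    "\<And>s. s \<noteq> s0 \<Longrightarrow> dist s s0 < r \<Longrightarrow>
       \<forall>x. 3/4 < x \<and> x \<le> 3/4 + \<delta> \<longrightarrow> pt x (4 ^ m * s) \<in> Fpow_img \<gamma> u n U"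
    unfolding edge_box_def eventually_at by auto
  define c :: real where "c = 4 ^ m"
  have c: "0 < c"
    by (simp add: c_def)
  show ?thesis
  proof
    show "0 < c * (r/4)"
      using c r by simp
    fix s x assume s: "c * (s0 + r/4) \<le> s" "s \<le> c * (s0 + r/4) + c * (r/4)" and x: "3/4 < x" "x \<le> 3/4 + \<delta>"
    have "s0 + r/4 \<le> s / c" "s / c \<le> s0 + r/2"
      using s c by (simp_all add: field_simps)
    then have "s / c \<noteq> s0" "dist (s / c) s0 < r"
      using r(1) by (auto simp: dist_real_def)
    then show "pt x s \<in> Fpow_img \<gamma> u n U"
      using r(2) x c by (force simp: c_def)
  qed
qed

end

section \<open>From the left edge to all of Y\<close>

context skew_product begin

lemma left_backward_orbit:
  assumes \<kappa>: "\<And>x t. c \<le> x \<Longrightarrow> x \<le> 3/4 \<Longrightarrow> \<kappa> \<le> L x t - x" and "0 \<le> \<kappa>"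
  shows "0 < y \<Longrightarrow> y < 3/4 \<Longrightarrow> \<exists>z. 0 < z \<and> z \<le> max c (y - real j * \<kappa>) \<and>
     (fm ^^ j) (pt z t) = pt y (4 ^ j * t) \<and> (\<forall>i\<le>j. (fm ^^ i) (pt z t) \<notin> Y)"
proof (induction j arbitrary: y)
  case 0
  then show ?case
    by (intro exI[of _ y]) (auto simp: pt_in_Y_iff)
next
  case (Suc j)
  have "y < L y (4 ^ j * t)"
    using Suc.prems by (intro L_gt) auto
  obtain w where w: "0 < w" "w < y" "L w (4 ^ j * t) = y"
    by (rule L_preimage[of y y "4 ^ j * t"]) (use Suc.prems \<open>y < L y (4 ^ j * t)\<close> in auto)
  with Suc.prems obtain z where z: "0 < z" "z \<le> max c (w - real j * \<kappa>)"
    "(fm ^^ j) (pt z t) = pt w (4 ^ j * t)" "\<forall>i\<le>j. (fm ^^ i) (pt z t) \<notin> Y"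
    using Suc.IH[of w] by auto
  have orbit: "(fm ^^ Suc j) (pt z t) = pt y (4 ^ Suc j * t)"
    using z(3) w Suc.prems by (simp add: fm_pt_left mult.assoc)
  have "w - real j * \<kappa> \<le> max c (y - real (Suc j) * \<kappa>)"
  proof (cases "c \<le> w")
    case True
    then have "\<kappa> \<le> y - w"
      using \<kappa>[of w "4 ^ j * t"] w Suc.prems by simp
    then show ?thesis
      by (simp add: algebra_simps)
  next
    case False
    moreover have "w - real j * \<kappa> \<le> w"
      using \<open>0 \<le> \<kappa>\<close> by simp
    ultimately show ?thesis
      by (simp add: le_max_iff_disj)
  qed
  moreover have "\<forall>i\<le>Suc j. (fm ^^ i) (pt z t) \<notin> Y"
    using z(4) orbit Suc.prems by (auto simp: le_Suc_eq pt_in_Y_iff)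
  ultimately show ?case
    using z(1,2) orbit by (intro exI[of _ z]) auto
qed

lemma left_preimage_of_interior:
  assumes "3/4 < x'" "x' < G s'"
  obtains \<psi> y where "0 < y" "y < 3/4" "\<And>k. fm (pt y (\<psi> + of_int k)) = pt x' s'"
proof -
  obtain i :: nat where i: "G s' = h ((real i + s')/4)"
    using G_eq_h by blast
  define \<psi> where "\<psi> = (real i + s')/4"
  have "x' < L (3/4) \<psi>"
    using assms(2) i by (simp add: \<psi>_def h_def)
  obtain y where y: "0 < y" "y < 3/4" "L y \<psi> = x'"
    by (rule L_preimage[of x' "3/4" \<psi>]) (use assms(1) \<open>x' < L (3/4) \<psi>\<close> in auto)
  have "fm (pt y (\<psi> + of_int k)) = pt x' s'" for k
  proof -
    have "4 * (\<psi> + of_int k) = s' + of_int (int i + 4 * k)"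
      by (simp add: \<psi>_def field_simps)
    then have "fm (pt y (\<psi> + of_int k)) = pt x' (s' + of_int (int i + 4 * k))"
      using y by (simp add: fm_pt_left L_add_of_int add.assoc)
    then show ?thesis
      by (simp only: circ_add_int)
  qed
  with y that show ?thesis
    by blast
qed

lemma excursion_to_interior:
  assumes "0 < \<delta>" "3/4 < x'" "x' < G s'"
  obtains \<psi> M0 where "\<And>M s k. M0 \<le> M \<Longrightarrow> 4 ^ Suc M * s = \<psi> + of_int k \<Longrightarrow>
      \<exists>x. 3/4 < x \<and> x \<le> 3/4 + \<delta> \<and> (fm ^^ Suc (Suc M)) (pt x s) = pt x' s' \<and>
          (\<forall>j. 1 \<le> j \<and> j < Suc (Suc M) \<longrightarrow> (fm ^^ j) (pt x s) \<notin> Y)"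
proof -
  obtain \<psi> y where y: "0 < y" "y < 3/4" and last: "\<And>k. fm (pt y (\<psi> + of_int k)) = pt x' s'"
    using left_preimage_of_interior[OF assms(2,3)] by blast
  obtain \<kappa> where \<kappa>: "0 < \<kappa>" "\<And>x t. 4 * \<delta> \<le> x \<Longrightarrow> x \<le> 3/4 \<Longrightarrow> \<kappa> \<le> L x t - x"
    using L_minus_id_lower_bound[of "4 * \<delta>"] assms(1) by auto
  obtain M0 :: nat where M0: "3/4 / \<kappa> < M0"
    using reals_Archimedean2 by blast
  show ?thesis
  proof (rule that[of M0 \<psi>])
    fix M s k assume M: "M0 \<le> M" and s: "4 ^ Suc M * s = \<psi> + of_int k"
    have "3/4 < real M0 * \<kappa>"
      using M0 \<kappa>(1) by (simp add: field_simps)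
    also have "\<dots> \<le> real M * \<kappa>"
      using M \<kappa>(1) by (intro mult_right_mono) auto
    finally have "max (4 * \<delta>) (y - real M * \<kappa>) = 4 * \<delta>"
      using y assms(1) by simp
    moreover have "4 ^ M * (4 * s) = \<psi> + of_int k"
      using s by (simp add: ac_simps)
    ultimately obtain z where z: "0 < z" "z \<le> 4 * \<delta>"
      "(fm ^^ M) (pt z (4 * s)) = pt y (\<psi> + of_int k)" "\<forall>i\<le>M. (fm ^^ i) (pt z (4 * s)) \<notin> Y"
      using left_backward_orbit[where c = "4 * \<delta>", OF \<kappa>(2) less_imp_le[OF \<kappa>(1)] y,
          where j = M and t = "4 * s"]
      by auto
    define x where "x = (z + 3)/4"
    have x: "3/4 < x" "x \<le> 3/4 + \<delta>" "fm (pt x s) = pt z (4 * s)"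
      using z by (auto simp: x_def fm_pt_right field_simps)
    then have iter: "(fm ^^ Suc j) (pt x s) = (fm ^^ j) (pt z (4 * s))" for j
      by (simp add: funpow_Suc_right del: funpow.simps)
    then have "(fm ^^ Suc (Suc M)) (pt x s) = pt x' s'"
      using z(3) last by (simp only: iter funpow.simps(2) comp_apply)
    moreover have "(fm ^^ j) (pt x s) \<notin> Y" if "1 \<le> j" "j < Suc (Suc M)" for j
      using z(4) iter that by (cases j) auto
    ultimately show "\<exists>x. 3/4 < x \<and> x \<le> 3/4 + \<delta> \<and> (fm ^^ Suc (Suc M)) (pt x s) = pt x' s' \<and>
        (\<forall>j. 1 \<le> j \<and> j < Suc (Suc M) \<longrightarrow> (fm ^^ j) (pt x s) \<notin> Y)"
      using x by blast
  qed
qed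

lemma interior_subset_Fimg_of_box:
  assumes "0 < \<eta>" "0 < \<delta>"
    and box: "\<And>s x. \<sigma> \<le> s \<Longrightarrow> s \<le> \<sigma> + \<eta> \<Longrightarrow> 3/4 < x \<Longrightarrow> x \<le> 3/4 + \<delta> \<Longrightarrow> pt x s \<in> W"
    and "3/4 < x'" "x' < G s'"
  shows "pt x' s' \<in> Fimg W"
proof -
  define \<delta>' where "\<delta>' = min \<delta> (3/16)"
  have "0 < \<delta>'"
    using assms(2) by (simp add: \<delta>'_def)
  then obtain \<psi> M0 where excursion: "\<And>M s k. M0 \<le> M \<Longrightarrow> 4 ^ Suc M * s = \<psi> + of_int k \<Longrightarrow>
      \<exists>x. 3/4 < x \<and> x \<le> 3/4 + \<delta>' \<and> (fm ^^ Suc (Suc M)) (pt x s) = pt x' s' \<and>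
          (\<forall>j. 1 \<le> j \<and> j < Suc (Suc M) \<longrightarrow> (fm ^^ j) (pt x s) \<notin> Y)"
    using excursion_to_interior assms(4,5) by metis
  obtain M1 where M1: "1 / \<eta> < (4::real) ^ M1"
    using real_arch_pow[of 4] by auto
  define M where "M = max M0 M1"
  have "(4::real) ^ M1 \<le> 4 ^ Suc M"
    by (intro power_increasing) (auto simp: M_def)
  with M1 have "1 / \<eta> < 4 ^ Suc M"
    by linarith
  then have "1 / 4 ^ Suc M \<le> \<eta>"
    using assms(1) by (simp add: field_simps)
  then obtain s k where s: "\<sigma> \<le> s" "s \<le> \<sigma> + \<eta>" "4 ^ Suc M * s = \<psi> + of_int k"
    using exists_scaled_angle[of "4 ^ Suc M" \<eta> \<sigma> \<psi>] by auto
  then obtain x where x: "3/4 < x" "x \<le> 3/4 + \<delta>'" "(fm ^^ Suc (Suc M)) (pt x s) = pt x' s'"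
    "\<And>j. 1 \<le> j \<Longrightarrow> j < Suc (Suc M) \<Longrightarrow> (fm ^^ j) (pt x s) \<notin> Y"
    using excursion[of M s k] by (auto simp: M_def)
  have "pt x s \<in> W"
    using x s box[of s x] by (simp add: \<delta>'_def)
  moreover have "pt x s \<in> Y"
    using x G_gt[of s] by (simp add: pt_in_Y_iff \<delta>'_def)
  moreover have "(fm ^^ Suc (Suc M)) (pt x s) \<in> Y"
    using x(3) assms(4,5) by (simp add: pt_in_Y_iff)
  ultimately have "(fm ^^ Suc (Suc M)) (pt x s) \<in> Fimg W"
    by (intro first_return_in_Fimg x(4)) auto
  then show ?thesis
    by (simp only: x(3))
qed

lemma interior_subset_Fimg:
  assumes "\<And>x s. 3/4 < x \<Longrightarrow> x < G s \<Longrightarrow> pt x s \<in> W" "3/4 < x" "x < G s"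
  shows "pt x s \<in> Fimg W"
proof (rule interior_subset_Fimg_of_box[of 1 "1/8" 0])
  fix s' x' :: real assume "3/4 < x'" "x' \<le> 3/4 + 1/8"
  then show "pt x' s' \<in> W"
    using assms(1) G_gt[of s'] by simp
qed (use assms in auto)

lemma left_edge_subset_Fimg:
  assumes "\<And>x s. 3/4 < x \<Longrightarrow> x < G s \<Longrightarrow> pt x s \<in> W"
  shows "pt (3/4) s \<in> Fimg W"
proof -
  have "fm (pt (15/16) (s/4)) = pt (3/4) s"
    by (simp add: fm_pt_right)
  moreover have "pt (15/16) (s/4) \<in> W" "pt (15/16) (s/4) \<in> Y"
    using assms G_gt[of "s/4"] by (auto simp: pt_in_Y_iff)
  ultimately show ?thesis
    using first_return_in_Fimg[of "pt (15/16) (s/4)" W 1] G_gt[of s] by (simp add: pt_in_Y_iff)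
qed

lemma top_edge_subset_Fimg:
  assumes "\<And>s. pt (3/4) s \<in> W"
  shows "pt (G s) s \<in> Fimg W"
proof -
  obtain i :: nat where i: "G s = h ((real i + s)/4)"
    using G_eq_h by blast
  have "fm (pt (3/4) ((real i + s)/4)) = pt (h ((real i + s)/4)) (4 * ((real i + s)/4))"
    by (simp add: fm_pt_left h_def)
  also have "4 * ((real i + s)/4) = s + of_int (int i)"
    by simp
  finally have "fm (pt (3/4) ((real i + s)/4)) = pt (G s) s"
    by (simp only: circ_add_int i)
  moreover have "pt (3/4) ((real i + s)/4) \<in> Y"
    using G_gt[of "(real i + s)/4"] by (simp add: pt_in_Y_iff)
  ultimately show ?thesis
    using first_return_in_Fimg[of "pt (3/4) ((real i + s)/4)" W 1] assms G_gt[of s] by (simp add: pt_in_Y_iff)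
qed

lemma Y_subset_Fimg_Fimg:
  assumes "\<And>x s. 3/4 < x \<Longrightarrow> x < G s \<Longrightarrow> pt x s \<in> W"
  shows "Y \<subseteq> Fimg (Fimg W)"
proof -
  have interior: "\<And>x s. 3/4 < x \<Longrightarrow> x < G s \<Longrightarrow> pt x s \<in> Fimg W"
    and left_edge: "\<And>s. pt (3/4) s \<in> Fimg W"
    using interior_subset_Fimg[OF assms] left_edge_subset_Fimg[OF assms] by blast+
  have "pt x s \<in> Fimg (Fimg W)" if x: "3/4 \<le> x" "x \<le> G s" for x s
  proof -
    consider "x = 3/4" | "x = G s" | "3/4 < x" "x < G s"
      using x by (metis order_le_less)
    then show ?thesis
    proof cases
      case 1
      show ?thesis
        unfolding 1 by (rule left_edge_subset_Fimg[OF interior])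
    next
      case 2
      show ?thesis
        unfolding 2 by (rule top_edge_subset_Fimg[OF left_edge])
    next
      case 3
      then show ?thesis
        using interior_subset_Fimg[OF interior] by simp
    qed
  qed
  then show ?thesis
    by (auto simp: Y_eq)
qed

lemma topologically_exact: "topologically_exact_F \<gamma> u"
  unfolding topologically_exact_F_def
proof (intro allI impI, elim conjE)
  fix U assume U: "openin (top_of_set Y) U" "U \<noteq> {}"
  then obtain p where "p \<in> U" "p \<in> Y"
    using openin_imp_subset by blast
  then obtain x0 s0 where "pt x0 s0 \<in> U"
    unfolding Y_eq by blast
  interpret skew_product_orbit \<gamma> u u' U s0
    by unfold_locales
  obtain a b where "strip 0 0 a b" "3/4 < a s0"
    using initial_strip[OF U(1) \<open>pt x0 s0 \<in> U\<close>] by blast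
  then obtain n m \<delta> where "edge_box n m \<delta>"
    using right_strip_edge_box by blast
  then obtain \<sigma> \<eta> where "0 < \<eta>" and box:
    "\<And>s x. \<sigma> \<le> s \<Longrightarrow> s \<le> \<sigma> + \<eta> \<Longrightarrow> 3/4 < x \<Longrightarrow> x \<le> 3/4 + \<delta> \<Longrightarrow> pt x s \<in> Fpow_img \<gamma> u n U"
    using edge_box_angle_interval by metis
  moreover have "0 < \<delta>"
    using \<open>edge_box n m \<delta>\<close> by (simp add: edge_box_def)
  ultimately have "pt x s \<in> Fpow_img \<gamma> u (Suc n) U" if "3/4 < x" "x < G s" for x s
    using interior_subset_Fimg_of_box[OF _ _ box that] by simp
  then have "Y \<subseteq> Fpow_img \<gamma> u (Suc (Suc (Suc n))) U"
    using Y_subset_Fimg_Fimg by simp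
  then show "\<exists>n. Y \<subseteq> Fpow_img \<gamma> u n U"
    by blast
qed

end

lemma C2_on_imp_differentiable: "C2_on S g \<Longrightarrow> p \<in> S \<Longrightarrow> g differentiable (at p within S)"
  unfolding C2_on_def differentiable_def by blast

lemma topologically_exact_F_if_expanding:
  assumes "\<gamma> > 0" "\<forall>p\<in>Sdom. u differentiable (at p within Sdom)" "\<forall>p\<in>Sdom. u p > 0"
    "\<forall>x t. 0 \<le> x \<and> x \<le> 3/4 \<longrightarrow> u (x, t + 1) = u (x, t)"
    "\<forall>x t. 0 \<le> x \<and> x \<le> 3/4 \<longrightarrow> x * (1 + x powr \<gamma> * u (x, t)) \<le> 1"
    "\<forall>p\<in>Sdom. \<forall>D. (fleft_lift \<gamma> u has_derivative D) (at p within Sdom) \<longrightarrow> (\<forall>v. norm (D v) \<ge> norm v)"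
    "\<forall>t. f1 \<gamma> u (3/4) t > 15/16"
  shows "topologically_exact_F \<gamma> u"
proof -
  obtain u' where "\<forall>p\<in>Sdom. (u has_derivative u' p) (at p within Sdom)"
    using assms(2) unfolding differentiable_def by metis
  then interpret skew_product \<gamma> u u'
    using assms by unfold_locales auto
  show ?thesis
    by (rule topologically_exact)
qed

theorem proposition2p3:
  fixes \<gamma> :: real
  assumes "\<gamma> > 0"
  shows "\<exists>\<epsilon>>0. \<forall>(u :: real \<times> real \<Rightarrow> real) (c0 :: real).
     C2_on Sdom u \<and>
     (\<forall>p\<in>Sdom. u p > 0) \<and>
     (\<forall>x t. 0 \<le> x \<and> x \<le> 3/4 \<longrightarrow> u (x, t + 1) = u (x, t)) \<and>
     c0 > 0 \<and> (\<forall>t. u (0, t) = c0) \<and>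
     (\<forall>x t. 0 \<le> x \<and> x \<le> 3/4 \<longrightarrow> x * (1 + x powr \<gamma> * u (x, t)) \<le> 1) \<and>
     (\<forall>p\<in>Sdom. \<forall>D. (fleft_lift \<gamma> u has_derivative D) (at p within Sdom) \<longrightarrow>
        (\<forall>v. norm (D v) \<ge> norm v)) \<and>
     (\<forall>t. f1 \<gamma> u (3/4) t > 15/16) \<and>
     (\<forall>p\<in>Sdom. \<forall>D. (u has_derivative D) (at p within Sdom) \<longrightarrow>
        \<bar>fst p * D (1, 0)\<bar> \<le> \<epsilon> \<and> \<bar>D (0, 1)\<bar> \<le> \<epsilon>)
     \<longrightarrow> topologically_exact_F \<gamma> u"
  using topologically_exact_F_if_expanding[OF assms] C2_on_imp_differentiable by (intro exI[of _ 1]) auto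

end
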